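(* Let $F= \left( \begin{bmatrix} f \\ g \end{bmatrix}, \begin{bmatrix} \alpha & \beta \\ \beta^\dagger & \delta \end{bmatrix}, \begin{bmatrix} s \\ t \end{bmatrix} \right): A \to B \otimes C$ be a map in $\mathfrak{G}\left[ (\mathbb{X}, \dagger) \right]_X$, and let $m: B \to C$ be a conditional generator for $\begin{bmatrix} \alpha & \beta \\ \beta^\dagger & \delta \end{bmatrix}$. Then define the map $G_m: B \otimes A \to C$ in $\mathfrak{G}\left[ (\mathbb{X}, \dagger) \right]_X$ as the triple: \begin{align*} G_m = \left( \begin{bmatrix} m & g - m \circ f \end{bmatrix}, \delta - m \circ \beta, t - m\circ s \right) \end{align*} Then $G_m$ is a conditional of $F$.
   Context: Let $(\mathbb{X}, \dagger)$ be a dagger additive category (a dagger category enriched in abelian groups with additive dagger and finite biproducts satisfying $\pi_j^\dagger = \iota_j$; maps between biproducts are written as matrices and the dagger acts as conjugate transpose) and fix an object $X$. A map $p$ is $\dagger$-positive if $p = \phi^\dagger \circ \phi$ for some $\phi$. The Gauss construction $\mathfrak{G}\left[ (\mathbb{X}, \dagger) \right]_X$ is the Markov category with the objects of $\mathbb{X}$, maps $A \to B$ the triples $(f,p,x)$ with $f: A \to B$, $p: B \to B$ $\dagger$-positive, $x: X \to B$; identities $\mathsf{Id}_A = (\mathsf{id}_A,0,0)$; composition $(g,q,y) \circ (f,p,x) = (g \circ f, q + g \circ p \circ g^\dagger, y + g \circ x)$; $A \otimes B = A \oplus B$, $(f,p,x) \otimes (g,q,y) = \left(f \oplus g, p \oplus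 q, \begin{bmatrix} x \\ y \end{bmatrix}\right)$; copy $\mathsf{copy}_A = \left(\begin{bmatrix} \mathsf{id}_A \\ \mathsf{id}_A \end{bmatrix}, 0, 0\right)$, delete $\mathsf{del}_A = (0,0,0): A \to \mathsf{0}$. In $F$, $f: A \to B$, $g: A \to C$, $\alpha: B \to B$, $\beta: C \to B$, $\delta: C \to C$, $s: X \to B$, $t: X \to C$. A conditional generator for a $\dagger$-positive map $\begin{bmatrix} \alpha & \beta \\ \beta^\dagger & \delta \end{bmatrix}: B \oplus C \to B \oplus C$ is a map $m: B \to C$ such that (i) $m \circ \alpha = \beta^\dagger$ and (ii) $\delta - m \circ \beta$ is $\dagger$-positive. A map $G: B \otimes A \to C$ is a conditional of $F: A \to B \otimes C$ if $(\mathsf{Id}_B \otimes G) \circ (\mathsf{copy}_B \otimes \mathsf{Id}_A) \circ (\mathsf{Id}_B \otimes \mathsf{del}_C \otimes \mathsf{Id}_A) \circ (F \otimes \mathsf{Id}_A) \circ \mathsf{copy}_A = F$. *)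

theory Defs
  imports Main
begin

record ('o, 'm) dac =
  chom  :: "'o \<Rightarrow> 'o \<Rightarrow> 'm set"
  ccomp :: "'m \<Rightarrow> 'm \<Rightarrow> 'm"        (* ccomp g f = g \<circ> f *)
  cid   :: "'o \<Rightarrow> 'm"
  czero :: "'o \<Rightarrow> 'o \<Rightarrow> 'm"
  cadd  :: "'m \<Rightarrow> 'm \<Rightarrow> 'm"
  cneg  :: "'m \<Rightarrow> 'm"
  cdag  :: "'m \<Rightarrow> 'm"
  cbsum :: "'o \<Rightarrow> 'o \<Rightarrow> 'o"
  czobj :: "'o"
  cp1   :: "'o \<Rightarrow> 'o \<Rightarrow> 'm"
  cp2   :: "'o \<Rightarrow> 'o \<Rightarrow> 'm"
  ci1   :: "'o \<Rightarrow> 'o \<Rightarrow> 'm"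
  ci2   :: "'o \<Rightarrow> 'o \<Rightarrow> 'm"

definition dagger_additive_category :: "('o, 'm) dac \<Rightarrow> bool" where
  "dagger_additive_category K \<longleftrightarrow>
    \<comment> \<open>category\<close>
    (\<forall>A B C f g. f \<in> chom K A B \<longrightarrow> g \<in> chom K B C \<longrightarrow> ccomp K g f \<in> chom K A C) \<and>
    (\<forall>A B C D f g h. f \<in> chom K A B \<longrightarrow> g \<in> chom K B C \<longrightarrow> h \<in> chom K C D \<longrightarrow>
        ccomp K h (ccomp K g f) = ccomp K (ccomp K h g) f) \<and>
    (\<forall>A. cid K A \<in> chom K A A) \<and>
    (\<forall>A B f. f \<in> chom K A B \<longrightarrow> ccomp K (cid K B) f = f \<and> ccomp K f (cid K A) = f) \<and>
    \<comment> \<open>enrichment in abelian groups\<close>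
    (\<forall>A B. czero K A B \<in> chom K A B) \<and>
    (\<forall>A B f g. f \<in> chom K A B \<longrightarrow> g \<in> chom K A B \<longrightarrow> cadd K f g \<in> chom K A B) \<and>
    (\<forall>A B f. f \<in> chom K A B \<longrightarrow> cneg K f \<in> chom K A B) \<and>
    (\<forall>A B f g h. f \<in> chom K A B \<longrightarrow> g \<in> chom K A B \<longrightarrow> h \<in> chom K A B \<longrightarrow>
        cadd K (cadd K f g) h = cadd K f (cadd K g h)) \<and>
    (\<forall>A B f g. f \<in> chom K A B \<longrightarrow> g \<in> chom K A B \<longrightarrow> cadd K f g = cadd K g f) \<and>
    (\<forall>A B f. f \<in> chom K A B \<longrightarrow> cadd K (czero K A B) f = f) \<and>
    (\<forall>A B f. f \<in> chom K A B \<longrightarrow> cadd K (cneg K f) f = czero K A B) \<and>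
    (\<forall>A B C f g g'. f \<in> chom K A B \<longrightarrow> g \<in> chom K B C \<longrightarrow> g' \<in> chom K B C \<longrightarrow>
        ccomp K (cadd K g g') f = cadd K (ccomp K g f) (ccomp K g' f)) \<and>
    (\<forall>A B C f f' g. f \<in> chom K A B \<longrightarrow> f' \<in> chom K A B \<longrightarrow> g \<in> chom K B C \<longrightarrow>
        ccomp K g (cadd K f f') = cadd K (ccomp K g f) (ccomp K g f')) \<and>
    \<comment> \<open>additive dagger\<close>
    (\<forall>A B f. f \<in> chom K A B \<longrightarrow> cdag K f \<in> chom K B A) \<and>
    (\<forall>A B f. f \<in> chom K A B \<longrightarrow> cdag K (cdag K f) = f) \<and>
    (\<forall>A. cdag K (cid K A) = cid K A) \<and>
    (\<forall>A B C f g. f \<in> chom K A B \<longrightarrow> g \<in> chom K B C \<longrightarrow>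
        cdag K (ccomp K g f) = ccomp K (cdag K f) (cdag K g)) \<and>
    (\<forall>A B f g. f \<in> chom K A B \<longrightarrow> g \<in> chom K A B \<longrightarrow>
        cdag K (cadd K f g) = cadd K (cdag K f) (cdag K g)) \<and>
    \<comment> \<open>finite biproducts with \<pi>_j^\<dagger> = \<iota>_j\<close>
    (\<forall>A B. cp1 K A B \<in> chom K (cbsum K A B) A \<and> cp2 K A B \<in> chom K (cbsum K A B) B \<and>
           ci1 K A B \<in> chom K A (cbsum K A B) \<and> ci2 K A B \<in> chom K B (cbsum K A B)) \<and>
    (\<forall>A B. ccomp K (cp1 K A B) (ci1 K A B) = cid K A \<and>
           ccomp K (cp2 K A B) (ci2 K A B) = cid K B \<and>
           ccomp K (cp1 K A B) (ci2 K A B) = czero K B A \<and>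
           ccomp K (cp2 K A B) (ci1 K A B) = czero K A B \<and>
           cadd K (ccomp K (ci1 K A B) (cp1 K A B)) (ccomp K (ci2 K A B) (cp2 K A B))
             = cid K (cbsum K A B)) \<and>
    (\<forall>A B. cdag K (cp1 K A B) = ci1 K A B \<and> cdag K (cp2 K A B) = ci2 K A B) \<and>
    \<comment> \<open>zero object (empty biproduct)\<close>
    cid K (czobj K) = czero K (czobj K) (czobj K)"

definition csub :: "('o, 'm) dac \<Rightarrow> 'm \<Rightarrow> 'm \<Rightarrow> 'm" where
  "csub K f g = cadd K f (cneg K g)"

definition dag_positive :: "('o, 'm) dac \<Rightarrow> 'o \<Rightarrow> 'm \<Rightarrow> bool" where
  "dag_positive K B p \<longleftrightarrow> (\<exists>D \<phi>. \<phi> \<in> chom K B D \<and> p = ccomp K (cdag K \<phi>) \<phi>)"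

text \<open>Column [x; y] : Z \<rightarrow> B \<oplus> C\<close>
definition col :: "('o, 'm) dac \<Rightarrow> 'o \<Rightarrow> 'o \<Rightarrow> 'm \<Rightarrow> 'm \<Rightarrow> 'm" where
  "col K B C x y = cadd K (ccomp K (ci1 K B C) x) (ccomp K (ci2 K B C) y)"

text \<open>Row [a b] : B \<oplus> C \<rightarrow> Z\<close>
definition row :: "('o, 'm) dac \<Rightarrow> 'o \<Rightarrow> 'o \<Rightarrow> 'm \<Rightarrow> 'm \<Rightarrow> 'm" where
  "row K B C a b = cadd K (ccomp K a (cp1 K B C)) (ccomp K b (cp2 K B C))"

text \<open>2x2 matrix [[a, b],[c, d]] : B \<oplus> C \<rightarrow> B' \<oplus> C'\<close>
definition mat2 :: "('o, 'm) dac \<Rightarrow> 'o \<Rightarrow> 'o \<Rightarrow> 'o \<Rightarrow> 'o \<Rightarrow> 'm \<Rightarrow> 'm \<Rightarrow> 'm \<Rightarrow> 'm \<Rightarrow> 'm" where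
  "mat2 K B C B' C' a b c d =
     col K B' C' (row K B C a b) (row K B C c d)"

definition msum :: "('o, 'm) dac \<Rightarrow> 'o \<Rightarrow> 'o \<Rightarrow> 'o \<Rightarrow> 'o \<Rightarrow> 'm \<Rightarrow> 'm \<Rightarrow> 'm" where
  "msum K A A' B B' f g = mat2 K A A' B B' f (czero K A' B) (czero K A B') g"

type_synonym 'm gmap = "'m \<times> 'm \<times> 'm"

definition gauss_map :: "('o, 'm) dac \<Rightarrow> 'o \<Rightarrow> 'o \<Rightarrow> 'o \<Rightarrow> 'm gmap \<Rightarrow> bool" where
  "gauss_map K X A B F \<longleftrightarrow> (case F of (f, p, x) \<Rightarrow>
      f \<in> chom K A B \<and> p \<in> chom K B B \<and> dag_positive K B p \<and> x \<in> chom K X B)"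

definition gid :: "('o, 'm) dac \<Rightarrow> 'o \<Rightarrow> 'o \<Rightarrow> 'm gmap" where
  "gid K X A = (cid K A, czero K A A, czero K X A)"

definition gcomp :: "('o, 'm) dac \<Rightarrow> 'm gmap \<Rightarrow> 'm gmap \<Rightarrow> 'm gmap" where
  "gcomp K G F = (case G of (g, q, y) \<Rightarrow> case F of (f, p, x) \<Rightarrow>
      (ccomp K g f, cadd K q (ccomp K g (ccomp K p (cdag K g))), cadd K y (ccomp K g x)))"

definition gtensor :: "('o, 'm) dac \<Rightarrow> 'o \<Rightarrow> 'o \<Rightarrow> 'o \<Rightarrow> 'o \<Rightarrow> 'm gmap \<Rightarrow> 'm gmap \<Rightarrow> 'm gmap" where
  "gtensor K A1 B1 A2 B2 F1 F2 = (case F1 of (f, p, x) \<Rightarrow> case F2 of (g, q, y) \<Rightarrow>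
      (msum K A1 A2 B1 B2 f g, msum K B1 B2 B1 B2 p q, col K B1 B2 x y))"

definition gcopy :: "('o, 'm) dac \<Rightarrow> 'o \<Rightarrow> 'o \<Rightarrow> 'm gmap" where
  "gcopy K X A = (col K A A (cid K A) (cid K A),
                  czero K (cbsum K A A) (cbsum K A A), czero K X (cbsum K A A))"

definition gdel :: "('o, 'm) dac \<Rightarrow> 'o \<Rightarrow> 'o \<Rightarrow> 'm gmap" where
  "gdel K X A = (czero K A (czobj K), czero K (czobj K) (czobj K), czero K X (czobj K))"

definition glift :: "('o, 'm) dac \<Rightarrow> 'o \<Rightarrow> 'o \<Rightarrow> 'm \<Rightarrow> 'm gmap" where
  "glift K X B h = (h, czero K B B, czero K X B)"

definition runitor :: "('o, 'm) dac \<Rightarrow> 'o \<Rightarrow> 'm" where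
  "runitor K B = cp1 K B (czobj K)"

definition assoc :: "('o, 'm) dac \<Rightarrow> 'o \<Rightarrow> 'o \<Rightarrow> 'o \<Rightarrow> 'm" where
  "assoc K B C A =
     col K B (cbsum K C A)
       (ccomp K (cp1 K B C) (cp1 K (cbsum K B C) A))
       (col K C A (ccomp K (cp2 K B C) (cp1 K (cbsum K B C) A)) (cp2 K (cbsum K B C) A))"

definition conditional_generator ::
  "('o, 'm) dac \<Rightarrow> 'o \<Rightarrow> 'o \<Rightarrow> 'm \<Rightarrow> 'm \<Rightarrow> 'm \<Rightarrow> 'm \<Rightarrow> bool" where
  "conditional_generator K B C \<alpha> \<beta> \<delta> m \<longleftrightarrow>
     m \<in> chom K B C \<and> ccomp K m \<alpha> = cdag K \<beta> \<and> dag_positive K C (csub K \<delta> (ccomp K m \<beta>))"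

text \<open>G : B \<otimes> A \<rightarrow> C is a conditional of F : A \<rightarrow> B \<otimes> C:
  (Id_B \<otimes> G) \<circ> (copy_B \<otimes> Id_A) \<circ> (Id_B \<otimes> del_C \<otimes> Id_A) \<circ> (F \<otimes> Id_A) \<circ> copy_A = F,
  with the (non-strict) coherence isomorphisms of \<oplus> made explicit.\<close>
definition is_conditional ::
  "('o, 'm) dac \<Rightarrow> 'o \<Rightarrow> 'o \<Rightarrow> 'o \<Rightarrow> 'o \<Rightarrow> 'm gmap \<Rightarrow> 'm gmap \<Rightarrow> bool" where
  "is_conditional K X A B C F G \<longleftrightarrow>
     gauss_map K X (cbsum K B A) C G \<and>
     (let Z = czobj K;
          c1 = gcopy K X A;
          c2 = gtensor K A (cbsum K B C) A A F (gid K X A);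
          c3 = gtensor K (cbsum K B C) (cbsum K B Z) A A
                 (gtensor K B B C Z (gid K X B) (gdel K X C)) (gid K X A);
          c4 = gtensor K (cbsum K B Z) B A A (glift K X B (runitor K B)) (gid K X A);
          c5 = gtensor K B (cbsum K B B) A A (gcopy K X B) (gid K X A);
          c6 = glift K X (cbsum K B (cbsum K B A)) (assoc K B B A);
          c7 = gtensor K B B (cbsum K B A) C (gid K X B) G
      in gcomp K c7 (gcomp K c6 (gcomp K c5 (gcomp K c4 (gcomp K c3 (gcomp K c2 c1))))) = F)"

end

theory Submission
  imports Defs
begin

(* In the Gauss construction a deterministic map (h, 0, 0) acts on a triple (k, p, x) by
   (h k, h p h\<^sup>\<dagger>, h x), so the composite defining a conditional is computed by block-matrix
   algebra. Copying A, applying F, discarding C, copying B and reassociating turn F into the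
   triple with linear part [f; f; id], covariance [[\<alpha>, \<alpha>, 0], [\<alpha>, \<alpha>, 0], [0, 0, 0]] and
   mean [s; s; 0]. Applying Id \<otimes> G_m then gives linear part [f; m f + (g - m f)] = [f; g],
   mean [s; m s + (t - m s)] = [s; t], and a covariance with blocks \<alpha>, \<alpha> m\<^sup>\<dagger>, m \<alpha> and
   m \<alpha> m\<^sup>\<dagger> + (\<delta> - m \<beta>). As the covariance of F is \<dagger>-positive, \<alpha> is self-adjoint, hence
   \<alpha> m\<^sup>\<dagger> = (m \<alpha>)\<^sup>\<dagger> = \<beta> and m \<alpha> m\<^sup>\<dagger> = m \<beta>, and this covariance is the one of F. *)

(* Binders as in dagger_additive_category_def, so that the two predicates differ only in how the
   conjunction is split. *)
locale dagger_additive =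
  fixes K :: "('o, 'm) dac"
  assumes comp_hom: "\<And>A B C f g. f \<in> chom K A B \<Longrightarrow> g \<in> chom K B C \<Longrightarrow> ccomp K g f \<in> chom K A C"
    and comp_assoc: "\<And>A B C D f g h. f \<in> chom K A B \<Longrightarrow> g \<in> chom K B C \<Longrightarrow> h \<in> chom K C D \<Longrightarrow>
      ccomp K h (ccomp K g f) = ccomp K (ccomp K h g) f"
    and id_hom: "\<And>A. cid K A \<in> chom K A A"
    and id_comp: "\<And>A B f. f \<in> chom K A B \<Longrightarrow> ccomp K (cid K B) f = f \<and> ccomp K f (cid K A) = f"
    and zero_hom: "\<And>A B. czero K A B \<in> chom K A B"
    and add_hom: "\<And>A B f g. f \<in> chom K A B \<Longrightarrow> g \<in> chom K A B \<Longrightarrow> cadd K f g \<in> chom K A B"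
    and neg_hom: "\<And>A B f. f \<in> chom K A B \<Longrightarrow> cneg K f \<in> chom K A B"
    and add_assoc: "\<And>A B f g h. f \<in> chom K A B \<Longrightarrow> g \<in> chom K A B \<Longrightarrow> h \<in> chom K A B \<Longrightarrow>
      cadd K (cadd K f g) h = cadd K f (cadd K g h)"
    and add_commute: "\<And>A B f g. f \<in> chom K A B \<Longrightarrow> g \<in> chom K A B \<Longrightarrow> cadd K f g = cadd K g f"
    and zero_add: "\<And>A B f. f \<in> chom K A B \<Longrightarrow> cadd K (czero K A B) f = f"
    and neg_add_cancel: "\<And>A B f. f \<in> chom K A B \<Longrightarrow> cadd K (cneg K f) f = czero K A B"
    and comp_add_left: "\<And>A B C f g g'. f \<in> chom K A B \<Longrightarrow> g \<in> chom K B C \<Longrightarrow> g' \<in> chom K B C \<Longrightarrow>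
      ccomp K (cadd K g g') f = cadd K (ccomp K g f) (ccomp K g' f)"
    and comp_add_right: "\<And>A B C f f' g. f \<in> chom K A B \<Longrightarrow> f' \<in> chom K A B \<Longrightarrow> g \<in> chom K B C \<Longrightarrow>
      ccomp K g (cadd K f f') = cadd K (ccomp K g f) (ccomp K g f')"
    and dag_hom: "\<And>A B f. f \<in> chom K A B \<Longrightarrow> cdag K f \<in> chom K B A"
    and dag_dag: "\<And>A B f. f \<in> chom K A B \<Longrightarrow> cdag K (cdag K f) = f"
    and dag_id: "\<And>A. cdag K (cid K A) = cid K A"
    and dag_comp: "\<And>A B C f g. f \<in> chom K A B \<Longrightarrow> g \<in> chom K B C \<Longrightarrow>
      cdag K (ccomp K g f) = ccomp K (cdag K f) (cdag K g)"
    and dag_add: "\<And>A B f g. f \<in> chom K A B \<Longrightarrow> g \<in> chom K A B \<Longrightarrow>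
      cdag K (cadd K f g) = cadd K (cdag K f) (cdag K g)"
    and bsum_homs: "\<And>A B. cp1 K A B \<in> chom K (cbsum K A B) A \<and> cp2 K A B \<in> chom K (cbsum K A B) B \<and>
      ci1 K A B \<in> chom K A (cbsum K A B) \<and> ci2 K A B \<in> chom K B (cbsum K A B)"
    and bsum_eqs: "\<And>A B. ccomp K (cp1 K A B) (ci1 K A B) = cid K A \<and>
      ccomp K (cp2 K A B) (ci2 K A B) = cid K B \<and>
      ccomp K (cp1 K A B) (ci2 K A B) = czero K B A \<and>
      ccomp K (cp2 K A B) (ci1 K A B) = czero K A B \<and>
      cadd K (ccomp K (ci1 K A B) (cp1 K A B)) (ccomp K (ci2 K A B) (cp2 K A B)) = cid K (cbsum K A B)"
    and dag_proj: "\<And>A B. cdag K (cp1 K A B) = ci1 K A B \<and> cdag K (cp2 K A B) = ci2 K A B"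
    and zero_object: "cid K (czobj K) = czero K (czobj K) (czobj K)"

lemma dagger_additive_categoryD: "dagger_additive_category K \<Longrightarrow> dagger_additive K"
  unfolding dagger_additive_category_def dagger_additive_def
  by (elim conjE) (intro conjI; assumption)

context dagger_additive
begin

abbreviation hom :: "'o \<Rightarrow> 'o \<Rightarrow> 'm set" where "hom \<equiv> chom K"
abbreviation bsum :: "'o \<Rightarrow> 'o \<Rightarrow> 'o" (infixr "\<oplus>" 65) where "A \<oplus> B \<equiv> cbsum K A B"

(* Copies of the operations with the objects of the morphisms involved as extra, logically
   irrelevant arguments. In the laws stated with them every object in a side condition
   f \<in> hom A B occurs in the rewritten term, so the simplifier can discharge these conditions;
   unfolding at_defs removes the annotations again. *)
definition comp_at :: "'o \<Rightarrow> 'o \<Rightarrow> 'o \<Rightarrow> 'm \<Rightarrow> 'm \<Rightarrow> 'm" where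
  "comp_at A B C g f = ccomp K g f"

definition add_at :: "'o \<Rightarrow> 'o \<Rightarrow> 'm \<Rightarrow> 'm \<Rightarrow> 'm" where
  "add_at A B f g = cadd K f g"

definition neg_at :: "'o \<Rightarrow> 'o \<Rightarrow> 'm \<Rightarrow> 'm" where
  "neg_at A B f = cneg K f"

definition dag_at :: "'o \<Rightarrow> 'o \<Rightarrow> 'm \<Rightarrow> 'm" where
  "dag_at A B f = cdag K f"

definition col_at :: "'o \<Rightarrow> 'o \<Rightarrow> 'o \<Rightarrow> 'm \<Rightarrow> 'm \<Rightarrow> 'm" where
  "col_at Z B C = col K B C"

definition row_at :: "'o \<Rightarrow> 'o \<Rightarrow> 'o \<Rightarrow> 'm \<Rightarrow> 'm \<Rightarrow> 'm" where
  "row_at B C Z = row K B C"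

lemmas at_defs = comp_at_def add_at_def neg_at_def dag_at_def col_at_def row_at_def

lemma p1_hom [simp]: "cp1 K A B \<in> hom (A \<oplus> B) A"
  and p2_hom [simp]: "cp2 K A B \<in> hom (A \<oplus> B) B"
  and i1_hom [simp]: "ci1 K A B \<in> hom A (A \<oplus> B)"
  and i2_hom [simp]: "ci2 K A B \<in> hom B (A \<oplus> B)"
  using bsum_homs by auto

lemma comp_at_hom [simp]: "f \<in> hom A B \<Longrightarrow> g \<in> hom B C \<Longrightarrow> comp_at A B C g f \<in> hom A C"
  unfolding comp_at_def by (rule comp_hom)

lemma add_at_hom [simp]: "f \<in> hom A B \<Longrightarrow> g \<in> hom A B \<Longrightarrow> add_at A B f g \<in> hom A B"
  unfolding add_at_def by (rule add_hom)

lemma neg_at_hom [simp]: "f \<in> hom A B \<Longrightarrow> neg_at A B f \<in> hom A B"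
  unfolding neg_at_def by (rule neg_hom)

lemma dag_at_hom [simp]: "f \<in> hom A B \<Longrightarrow> dag_at A B f \<in> hom B A"
  unfolding dag_at_def by (rule dag_hom)

lemma col_at_hom [simp]: "x \<in> hom Z B \<Longrightarrow> y \<in> hom Z C \<Longrightarrow> col_at Z B C x y \<in> hom Z (B \<oplus> C)"
  unfolding col_at_def col_def by (intro add_hom comp_hom[OF _ i1_hom] comp_hom[OF _ i2_hom])

lemma row_at_hom [simp]: "a \<in> hom B Z \<Longrightarrow> b \<in> hom C Z \<Longrightarrow> row_at B C Z a b \<in> hom (B \<oplus> C) Z"
  unfolding row_at_def row_def by (intro add_hom comp_hom[OF p1_hom] comp_hom[OF p2_hom])

declare id_hom [simp] zero_hom [simp]

lemma comp_at_assoc [simp]: "f \<in> hom A B \<Longrightarrow> g \<in> hom B C \<Longrightarrow> h \<in> hom C D \<Longrightarrow>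
    comp_at A B D (comp_at B C D h g) f = comp_at A C D h (comp_at A B C g f)"
  unfolding comp_at_def by (simp add: comp_assoc)

lemma comp_at_id_left [simp]: "f \<in> hom A B \<Longrightarrow> comp_at A B B (cid K B) f = f"
  unfolding comp_at_def using id_comp by blast

lemma comp_at_id_right [simp]: "f \<in> hom A B \<Longrightarrow> comp_at A A B f (cid K A) = f"
  unfolding comp_at_def using id_comp by blast

lemma add_at_assoc [simp]: "f \<in> hom A B \<Longrightarrow> g \<in> hom A B \<Longrightarrow> h \<in> hom A B \<Longrightarrow>
    add_at A B (add_at A B f g) h = add_at A B f (add_at A B g h)"
  unfolding add_at_def by (rule add_assoc)

lemma add_at_commute: "f \<in> hom A B \<Longrightarrow> g \<in> hom A B \<Longrightarrow> add_at A B f g = add_at A B g f"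
  unfolding add_at_def by (rule add_commute)

lemma add_at_zero_left [simp]: "f \<in> hom A B \<Longrightarrow> add_at A B (czero K A B) f = f"
  unfolding add_at_def by (rule zero_add)

lemma add_at_zero_right [simp]: "f \<in> hom A B \<Longrightarrow> add_at A B f (czero K A B) = f"
  by (simp add: add_at_commute[of f])

lemma neg_at_add_cancel [simp]: "f \<in> hom A B \<Longrightarrow> add_at A B (neg_at A B f) f = czero K A B"
  unfolding add_at_def neg_at_def by (rule neg_add_cancel)

lemma add_at_neg_cancel [simp]: "f \<in> hom A B \<Longrightarrow> add_at A B f (neg_at A B f) = czero K A B"
  by (simp add: add_at_commute[of f])

lemma comp_at_add_left [simp]: "f \<in> hom A B \<Longrightarrow> g \<in> hom B C \<Longrightarrow> g' \<in> hom B C \<Longrightarrow>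
    comp_at A B C (add_at B C g g') f = add_at A C (comp_at A B C g f) (comp_at A B C g' f)"
  unfolding comp_at_def add_at_def by (rule comp_add_left)

lemma comp_at_add_right [simp]: "f \<in> hom A B \<Longrightarrow> f' \<in> hom A B \<Longrightarrow> g \<in> hom B C \<Longrightarrow>
    comp_at A B C g (add_at A B f f') = add_at A C (comp_at A B C g f) (comp_at A B C g f')"
  unfolding comp_at_def add_at_def by (rule comp_add_right)

lemma dag_at_dag [simp]: "f \<in> hom A B \<Longrightarrow> dag_at B A (dag_at A B f) = f"
  unfolding dag_at_def by (rule dag_dag)

lemma dag_at_id [simp]: "dag_at A A (cid K A) = cid K A"
  unfolding dag_at_def by (rule dag_id)

lemma dag_at_comp [simp]: "f \<in> hom A B \<Longrightarrow> g \<in> hom B C \<Longrightarrow>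
    dag_at A C (comp_at A B C g f) = comp_at C B A (dag_at A B f) (dag_at B C g)"
  unfolding dag_at_def comp_at_def by (rule dag_comp)

lemma dag_at_add [simp]: "f \<in> hom A B \<Longrightarrow> g \<in> hom A B \<Longrightarrow>
    dag_at A B (add_at A B f g) = add_at B A (dag_at A B f) (dag_at A B g)"
  unfolding dag_at_def add_at_def by (rule dag_add)

lemma dag_at_p1 [simp]: "dag_at (A \<oplus> B) A (cp1 K A B) = ci1 K A B"
  and dag_at_p2 [simp]: "dag_at (A \<oplus> B) B (cp2 K A B) = ci2 K A B"
  unfolding dag_at_def using dag_proj by auto

lemma dag_at_i1 [simp]: "dag_at A (A \<oplus> B) (ci1 K A B) = cp1 K A B"
  and dag_at_i2 [simp]: "dag_at B (A \<oplus> B) (ci2 K A B) = cp2 K A B"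
  using dag_at_dag[OF p1_hom[of A B]] dag_at_dag[OF p2_hom[of A B]] by simp_all

lemma p1_i1 [simp]: "comp_at A (A \<oplus> B) A (cp1 K A B) (ci1 K A B) = cid K A"
  and p2_i2 [simp]: "comp_at B (A \<oplus> B) B (cp2 K A B) (ci2 K A B) = cid K B"
  and p1_i2 [simp]: "comp_at B (A \<oplus> B) A (cp1 K A B) (ci2 K A B) = czero K B A"
  and p2_i1 [simp]: "comp_at A (A \<oplus> B) B (cp2 K A B) (ci1 K A B) = czero K A B"
  unfolding comp_at_def using bsum_eqs by auto

lemma add_at_left_commute: "f \<in> hom A B \<Longrightarrow> g \<in> hom A B \<Longrightarrow> h \<in> hom A B \<Longrightarrow>
    add_at A B f (add_at A B g h) = add_at A B g (add_at A B f h)"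
  by (metis add_at_assoc add_at_commute)

lemmas add_at_ac = add_at_commute add_at_left_commute

lemma add_at_idem_zero:
  assumes x: "x \<in> hom A B" and idem: "add_at A B x x = x"
  shows "x = czero K A B"
proof -
  have "czero K A B = add_at A B (neg_at A B x) (add_at A B x x)"
    using x idem by simp
  also have "\<dots> = x"
    using x by (simp flip: add_at_assoc)
  finally show ?thesis ..
qed

lemma comp_at_zero_left [simp]: "f \<in> hom A B \<Longrightarrow> comp_at A B C (czero K B C) f = czero K A C"
  by (rule add_at_idem_zero) (simp_all flip: comp_at_add_left)

lemma comp_at_zero_right [simp]: "g \<in> hom B C \<Longrightarrow> comp_at A B C g (czero K A B) = czero K A C"
  by (rule add_at_idem_zero) (simp_all flip: comp_at_add_right)

lemma dag_at_zero [simp]: "dag_at A B (czero K A B) = czero K B A"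
  by (rule add_at_idem_zero) (simp_all flip: dag_at_add)

lemma add_at_neg_cancel_left [simp]: "x \<in> hom A B \<Longrightarrow> g \<in> hom A B \<Longrightarrow>
    add_at A B x (add_at A B g (neg_at A B x)) = g"
  using add_at_commute[of g A B "neg_at A B x"] by (simp flip: add_at_assoc)

(* comp_at_assoc makes right-nested composites the simp normal form, so the biproduct equations
   are also needed in the form \<pi> \<circ> (\<iota> \<circ> x). *)
lemma p1_i1_comp [simp]: "x \<in> hom Z A \<Longrightarrow>
    comp_at Z (A \<oplus> B) A (cp1 K A B) (comp_at Z A (A \<oplus> B) (ci1 K A B) x) = x"
  by (simp flip: comp_at_assoc)

lemma p2_i2_comp [simp]: "x \<in> hom Z B \<Longrightarrow>
    comp_at Z (A \<oplus> B) B (cp2 K A B) (comp_at Z B (A \<oplus> B) (ci2 K A B) x) = x"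
  by (simp flip: comp_at_assoc)

lemma p1_i2_comp [simp]: "x \<in> hom Z B \<Longrightarrow>
    comp_at Z (A \<oplus> B) A (cp1 K A B) (comp_at Z B (A \<oplus> B) (ci2 K A B) x) = czero K Z A"
  by (simp flip: comp_at_assoc)

lemma p2_i1_comp [simp]: "x \<in> hom Z A \<Longrightarrow>
    comp_at Z (A \<oplus> B) B (cp2 K A B) (comp_at Z A (A \<oplus> B) (ci1 K A B) x) = czero K Z B"
  by (simp flip: comp_at_assoc)

lemma col_at_eq: "col_at Z B C x y =
    add_at Z (B \<oplus> C) (comp_at Z B (B \<oplus> C) (ci1 K B C) x) (comp_at Z C (B \<oplus> C) (ci2 K B C) y)"
  unfolding at_defs col_def ..

lemma row_at_eq: "row_at B C Z a b =
    add_at (B \<oplus> C) Z (comp_at (B \<oplus> C) B Z a (cp1 K B C)) (comp_at (B \<oplus> C) C Z b (cp2 K B C))"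
  unfolding at_defs row_def ..

lemma p1_col [simp]: "x \<in> hom Z B \<Longrightarrow> y \<in> hom Z C \<Longrightarrow>
    comp_at Z (B \<oplus> C) B (cp1 K B C) (col_at Z B C x y) = x"
  by (simp add: col_at_eq)

lemma p2_col [simp]: "x \<in> hom Z B \<Longrightarrow> y \<in> hom Z C \<Longrightarrow>
    comp_at Z (B \<oplus> C) C (cp2 K B C) (col_at Z B C x y) = y"
  by (simp add: col_at_eq)

lemma row_i1 [simp]: "a \<in> hom B Z \<Longrightarrow> b \<in> hom C Z \<Longrightarrow>
    comp_at B (B \<oplus> C) Z (row_at B C Z a b) (ci1 K B C) = a"
  by (simp add: row_at_eq)

lemma row_i2 [simp]: "a \<in> hom B Z \<Longrightarrow> b \<in> hom C Z \<Longrightarrow>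
    comp_at C (B \<oplus> C) Z (row_at B C Z a b) (ci2 K B C) = b"
  by (simp add: row_at_eq)

lemma row_i1_comp [simp]: "a \<in> hom B Z \<Longrightarrow> b \<in> hom C Z \<Longrightarrow> h \<in> hom W B \<Longrightarrow>
    comp_at W (B \<oplus> C) Z (row_at B C Z a b) (comp_at W B (B \<oplus> C) (ci1 K B C) h) = comp_at W B Z a h"
  by (simp flip: comp_at_assoc)

lemma row_i2_comp [simp]: "a \<in> hom B Z \<Longrightarrow> b \<in> hom C Z \<Longrightarrow> h \<in> hom W C \<Longrightarrow>
    comp_at W (B \<oplus> C) Z (row_at B C Z a b) (comp_at W C (B \<oplus> C) (ci2 K B C) h) = comp_at W C Z b h"
  by (simp flip: comp_at_assoc)

lemma col_comp [simp]: "x \<in> hom Z B \<Longrightarrow> y \<in> hom Z C \<Longrightarrow> h \<in> hom W Z \<Longrightarrow>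
    comp_at W Z (B \<oplus> C) (col_at Z B C x y) h = col_at W B C (comp_at W Z B x h) (comp_at W Z C y h)"
  by (simp add: col_at_eq)

lemma comp_row [simp]: "a \<in> hom B Z \<Longrightarrow> b \<in> hom C Z \<Longrightarrow> h \<in> hom Z W \<Longrightarrow>
    comp_at (B \<oplus> C) Z W h (row_at B C Z a b) = row_at B C W (comp_at B Z W h a) (comp_at C Z W h b)"
  by (simp add: row_at_eq)

lemma row_col [simp]: "a \<in> hom B Z \<Longrightarrow> b \<in> hom C Z \<Longrightarrow> x \<in> hom W B \<Longrightarrow> y \<in> hom W C \<Longrightarrow>
    comp_at W (B \<oplus> C) Z (row_at B C Z a b) (col_at W B C x y) = add_at W Z (comp_at W B Z a x) (comp_at W C Z b y)"
  by (simp add: col_at_eq)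

lemma dag_col [simp]: "x \<in> hom Z B \<Longrightarrow> y \<in> hom Z C \<Longrightarrow>
    dag_at Z (B \<oplus> C) (col_at Z B C x y) = row_at B C Z (dag_at Z B x) (dag_at Z C y)"
  by (simp add: col_at_eq row_at_eq)

lemma dag_row [simp]: "a \<in> hom B Z \<Longrightarrow> b \<in> hom C Z \<Longrightarrow>
    dag_at (B \<oplus> C) Z (row_at B C Z a b) = col_at Z B C (dag_at B Z a) (dag_at C Z b)"
  by (simp add: col_at_eq row_at_eq)

lemma col_add [simp]: "x \<in> hom Z B \<Longrightarrow> y \<in> hom Z C \<Longrightarrow> x' \<in> hom Z B \<Longrightarrow> y' \<in> hom Z C \<Longrightarrow>
    add_at Z (B \<oplus> C) (col_at Z B C x y) (col_at Z B C x' y') = col_at Z B C (add_at Z B x x') (add_at Z C y y')"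
  by (simp add: col_at_eq add_at_ac)

lemma row_add [simp]: "a \<in> hom B Z \<Longrightarrow> b \<in> hom C Z \<Longrightarrow> a' \<in> hom B Z \<Longrightarrow> b' \<in> hom C Z \<Longrightarrow>
    add_at (B \<oplus> C) Z (row_at B C Z a b) (row_at B C Z a' b') = row_at B C Z (add_at B Z a a') (add_at C Z b b')"
  by (simp add: row_at_eq add_at_ac)

lemma row_of_cols [simp]: "a \<in> hom B Z1 \<Longrightarrow> b \<in> hom C Z1 \<Longrightarrow> c \<in> hom B Z2 \<Longrightarrow> d \<in> hom C Z2 \<Longrightarrow>
    row_at B C (Z1 \<oplus> Z2) (col_at B Z1 Z2 a c) (col_at C Z1 Z2 b d) =
    col_at (B \<oplus> C) Z1 Z2 (row_at B C Z1 a b) (row_at B C Z2 c d)"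
  by (simp add: row_at_eq)

lemma mat2_eq [simp]: "mat2 K B C B' C' a b c d =
    col_at (B \<oplus> C) B' C' (row_at B C B' a b) (row_at B C C' c d)"
  unfolding mat2_def at_defs ..

lemma msum_eq [simp]: "msum K A A' B B' f g =
    col_at (A \<oplus> A') B B' (row_at A A' B f (czero K A' B)) (row_at A A' B' (czero K A B') g)"
  unfolding msum_def by simp

definition gcomp_at :: "'o \<Rightarrow> 'o \<Rightarrow> 'o \<Rightarrow> 'o \<Rightarrow> 'm gmap \<Rightarrow> 'm gmap \<Rightarrow> 'm gmap" where
  "gcomp_at X A B C = gcomp K"

definition gtensor_at :: "'o \<Rightarrow> 'o \<Rightarrow> 'o \<Rightarrow> 'o \<Rightarrow> 'o \<Rightarrow> 'm gmap \<Rightarrow> 'm gmap \<Rightarrow> 'm gmap" where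
  "gtensor_at X A1 B1 A2 B2 = gtensor K A1 B1 A2 B2"

lemma gcomp_at_eq [simp]: "gcomp_at X A B C (g, q, y) (f, p, x) =
    (comp_at A B C g f, add_at C C q (comp_at C B C g (comp_at C B B p (dag_at B C g))),
     add_at X C y (comp_at X B C g x))"
  unfolding gcomp_at_def gcomp_def at_defs by simp

lemma gtensor_at_eq [simp]: "gtensor_at X A1 B1 A2 B2 (f, p, x) (g, q, y) =
    (msum K A1 A2 B1 B2 f g, msum K B1 B2 B1 B2 p q, col_at X B1 B2 x y)"
  unfolding gtensor_at_def gtensor_def col_at_def by simp

lemma gcopy_eq [simp]: "gcopy K X A = (col_at A A A (cid K A) (cid K A), czero K (A \<oplus> A) (A \<oplus> A), czero K X (A \<oplus> A))"
  unfolding gcopy_def col_at_def ..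

lemma assoc_eq [simp]: "assoc K B C A = col_at ((B \<oplus> C) \<oplus> A) B (C \<oplus> A)
    (comp_at ((B \<oplus> C) \<oplus> A) (B \<oplus> C) B (cp1 K B C) (cp1 K (B \<oplus> C) A))
    (col_at ((B \<oplus> C) \<oplus> A) C A (comp_at ((B \<oplus> C) \<oplus> A) (B \<oplus> C) C (cp2 K B C) (cp1 K (B \<oplus> C) A))
      (cp2 K (B \<oplus> C) A))"
  unfolding assoc_def at_defs ..

lemmas gauss_lift_defs = gid_def gdel_def glift_def runitor_def

lemma gcomp_gtensor_gid_gcopy:
  assumes "k \<in> hom A B" "p \<in> hom B B" "x \<in> hom X B"
  shows "gcomp_at X A (A \<oplus> A) (B \<oplus> A) (gtensor_at X A B A A (k, p, x) (gid K X A)) (gcopy K X A) =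
    (col_at A B A k (cid K A), msum K B A B A p (czero K A A), col_at X B A x (czero K X A))"
  using assms by (simp add: gauss_lift_defs)

lemma marginalise_and_copy:
  assumes "f \<in> hom A B" "g \<in> hom A C" "s \<in> hom X B" "t \<in> hom X C"
    and "\<alpha> \<in> hom B B" "\<beta> \<in> hom C B" "\<gamma> \<in> hom B C" "\<delta> \<in> hom C C"
  shows "gcomp_at X A ((B \<oplus> B) \<oplus> A) (B \<oplus> (B \<oplus> A)) (glift K X (B \<oplus> (B \<oplus> A)) (assoc K B B A))
     (gcomp_at X A (B \<oplus> A) ((B \<oplus> B) \<oplus> A) (gtensor_at X B (B \<oplus> B) A A (gcopy K X B) (gid K X A))
      (gcomp_at X A ((B \<oplus> czobj K) \<oplus> A) (B \<oplus> A)
        (gtensor_at X (B \<oplus> czobj K) B A A (glift K X B (runitor K B)) (gid K X A))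
        (gcomp_at X A ((B \<oplus> C) \<oplus> A) ((B \<oplus> czobj K) \<oplus> A)
          (gtensor_at X (B \<oplus> C) (B \<oplus> czobj K) A A
            (gtensor_at X B B C (czobj K) (gid K X B) (gdel K X C)) (gid K X A))
          (col_at A (B \<oplus> C) A (col_at A B C f g) (cid K A),
           msum K (B \<oplus> C) A (B \<oplus> C) A (mat2 K B C B C \<alpha> \<beta> \<gamma> \<delta>) (czero K A A),
           col_at X (B \<oplus> C) A (col_at X B C s t) (czero K X A)))))
   = (col_at A B (B \<oplus> A) f (col_at A B A f (cid K A)),
      mat2 K B (B \<oplus> A) B (B \<oplus> A) \<alpha> (row_at B A B \<alpha> (czero K A B)) (col_at B B A \<alpha> (czero K B A))
        (msum K B A B A \<alpha> (czero K A A)),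
      col_at X B (B \<oplus> A) s (col_at X B A s (czero K X A)))"
  using assms by (simp add: gauss_lift_defs)

lemma conditional_generator_recovers_joint:
  assumes types: "f \<in> hom A B" "g \<in> hom A C" "s \<in> hom X B" "t \<in> hom X C"
    "\<alpha> \<in> hom B B" "\<beta> \<in> hom C B" "\<delta> \<in> hom C C" "m \<in> hom B C"
    and gen: "comp_at B B C m \<alpha> = dag_at C B \<beta>" and self_adj: "dag_at B B \<alpha> = \<alpha>"
  shows "gcomp_at X A (B \<oplus> (B \<oplus> A)) (B \<oplus> C)
     (gtensor_at X B B (B \<oplus> A) C (gid K X B)
       (row_at B A C m (add_at A C g (neg_at A C (comp_at A B C m f))),
        add_at C C \<delta> (neg_at C C (comp_at C B C m \<beta>)),
        add_at X C t (neg_at X C (comp_at X B C m s))))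
     (col_at A B (B \<oplus> A) f (col_at A B A f (cid K A)),
      mat2 K B (B \<oplus> A) B (B \<oplus> A) \<alpha> (row_at B A B \<alpha> (czero K A B)) (col_at B B A \<alpha> (czero K B A))
        (msum K B A B A \<alpha> (czero K A A)),
      col_at X B (B \<oplus> A) s (col_at X B A s (czero K X A)))
   = (col_at A B C f g, mat2 K B C B C \<alpha> \<beta> (dag_at C B \<beta>) \<delta>, col_at X B C s t)"
proof -
  have "comp_at C B B \<alpha> (dag_at B C m) = comp_at C B B (dag_at B B \<alpha>) (dag_at B C m)"
    by (simp add: self_adj)
  also have "\<dots> = dag_at B C (comp_at B B C m \<alpha>)"
    using types by simp
  finally have gen': "comp_at C B B \<alpha> (dag_at B C m) = \<beta>"
    using types by (simp add: gen)
  show ?thesis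
    using types by (simp add: gen gen' gauss_lift_defs)
qed

lemma dag_positive_self_adjoint: "dag_positive K B p \<Longrightarrow> cdag K p = p"
  unfolding dag_positive_def by (auto simp: dag_comp[OF _ dag_hom] dag_dag)

lemma self_adjoint_mat2_corner:
  assumes "\<alpha> \<in> hom B B" "\<beta> \<in> hom C B" "\<gamma> \<in> hom B C" "\<delta> \<in> hom C C"
    and "dag_at (B \<oplus> C) (B \<oplus> C) (mat2 K B C B C \<alpha> \<beta> \<gamma> \<delta>) = mat2 K B C B C \<alpha> \<beta> \<gamma> \<delta>"
  shows "dag_at B B \<alpha> = \<alpha>"
proof -
  let ?corner = "\<lambda>M. comp_at B (B \<oplus> C) B (cp1 K B C) (comp_at B (B \<oplus> C) (B \<oplus> C) M (ci1 K B C))"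
  have "?corner (dag_at (B \<oplus> C) (B \<oplus> C) (mat2 K B C B C \<alpha> \<beta> \<gamma> \<delta>)) = ?corner (mat2 K B C B C \<alpha> \<beta> \<gamma> \<delta>)"
    using assms(5) by (rule arg_cong)
  then show ?thesis
    using assms(1-4) by simp
qed

lemmas conditional_composite_steps =
  gcomp_gtensor_gid_gcopy marginalise_and_copy conditional_generator_recovers_joint

end

theorem mainTheorem7:
  fixes K :: "('o, 'm) dac"
    and X A B C :: 'o
    and f g \<alpha> \<beta> \<delta> s t m :: 'm
  assumes "dagger_additive_category K"
    and "f \<in> chom K A B" and "g \<in> chom K A C"
    and "\<alpha> \<in> chom K B B" and "\<beta> \<in> chom K C B" and "\<delta> \<in> chom K C C"
    and "s \<in> chom K X B" and "t \<in> chom K X C"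
    and "gauss_map K X A (cbsum K B C)
           (col K B C f g, mat2 K B C B C \<alpha> \<beta> (cdag K \<beta>) \<delta>, col K B C s t)"
    and "conditional_generator K B C \<alpha> \<beta> \<delta> m"
  shows "is_conditional K X A B C
           (col K B C f g, mat2 K B C B C \<alpha> \<beta> (cdag K \<beta>) \<delta>, col K B C s t)
           (row K B A m (csub K g (ccomp K m f)), csub K \<delta> (ccomp K m \<beta>), csub K t (ccomp K m s))"
proof -
  interpret dagger_additive K
    using assms(1) by (rule dagger_additive_categoryD)
  from assms(10) have m: "m \<in> hom B C" and gen: "ccomp K m \<alpha> = cdag K \<beta>"
    and pos: "dag_positive K C (csub K \<delta> (ccomp K m \<beta>))"
    unfolding conditional_generator_def by auto
  from assms(9) have F_types: "col K B C f g \<in> hom A (B \<oplus> C)" "col K B C s t \<in> hom X (B \<oplus> C)"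
    "mat2 K B C B C \<alpha> \<beta> (cdag K \<beta>) \<delta> \<in> hom (B \<oplus> C) (B \<oplus> C)"
    and F_pos: "dag_positive K (B \<oplus> C) (mat2 K B C B C \<alpha> \<beta> (cdag K \<beta>) \<delta>)"
    unfolding gauss_map_def by auto
  have self_adj: "cdag K \<alpha> = \<alpha>"
    using self_adjoint_mat2_corner[of \<alpha> B \<beta> C "cdag K \<beta>" \<delta>] assms(4-6)
      dag_positive_self_adjoint[OF F_pos] by (simp add: dag_at_def dag_hom)
  have G: "gauss_map K X (B \<oplus> A) C
      (row K B A m (csub K g (ccomp K m f)), csub K \<delta> (ccomp K m \<beta>), csub K t (ccomp K m s))"
    using assms(2-8) m pos unfolding gauss_map_def csub_def
    by (auto intro!: row_at_hom[unfolded row_at_def] add_hom neg_hom comp_hom)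
  show ?thesis
    unfolding is_conditional_def Let_def csub_def
    using G[unfolded csub_def] F_types assms(2-8) m gen self_adj
    by (simp only: simp_thms dag_hom
        conditional_composite_steps [unfolded gcomp_at_def gtensor_at_def at_defs])
qed

end
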